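(* Let $\mathcal{H}$ be a real Hilbert space with inner product $(\cdot,\cdot)$, let $C=[C_1,C_2,\ldots]\subseteq\mathcal{H}$ be a linearly independent collection of "constant" elements, and let $\mathrm{E}:\mathcal{H}\to\mathrm{span}\{C\}$ denote the orthogonal projection onto (the closure of) $\mathrm{span}\{C\}$ with respect to $(\cdot,\cdot)$. Let $\{Y_{jk}: j\in J,\ k=1,2,\ldots\}\subseteq\mathcal{H}$ be generalised second-order $n$-step exchangeable over $k$, i.e. there is $n\in\mathbb{N}$ with $\mathrm{E}(Y_{jk})=e_j$ for all $j,k$, and constants $d_{mij}$ ($0\le m\le n-1$) and $c_{ij}$ such that $(Y_{ik},Y_{jl})=d_{|k-l|\,ij}$ whenever $|k-l|\le n-1$ and $(Y_{ik},Y_{jl})=c_{ij}$ whenever $|k-l|\ge n$. Then the $Y_{jk}$ may be represented as $$Y_{jk}=M_j+R_{jk}\quad\forall j,k,$$ with $M_j,R_{jk}\in\mathcal{H}$ satisfying: $\mathrm{E}(Y_{jk})=\mathrm{E}(M_j)$ and $\mathrm{E}(R_{jk})=0$ for all $j,k$; $(M_i,M_j)=(M_i,Y_{jk})=c_{ij}$ and $(M_i,R_{jk})=0$ for all $i,j,k$; $(R_{ik},R_{jl})=(Y_{ik},R_{jl})=(Y_{ik},Y_{jl})-c_{ij}$ for all $i,j,k,l$. Further, the collection $\{R_{jk}\}$ is generalised second-order $n$-step exchangeable over $k$, with $(R_{ik},R_{jl})=0$ for all $i,j$ and all $|k-l|\ge n$.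
   Context: In the intended application $\mathcal{H}$ is the completion of the span of the constants and the $Y_{jk}$; for random scalars one takes $C=\{1\}$ and $(X,Y)=\mathrm{E}(XY)$, so that $\mathrm{E}$ is the usual expectation. *)

theory Defs
  imports "HOL-Analysis.Analysis"
begin

definition is_orth_proj :: "'a::real_inner set \<Rightarrow> ('a \<Rightarrow> 'a) \<Rightarrow> bool" where
  "is_orth_proj S E \<longleftrightarrow> (\<forall>x. E x \<in> S \<and> (\<forall>y\<in>S. inner (x - E x) y = 0))"

definition absdiff :: "nat \<Rightarrow> nat \<Rightarrow> nat" where
  "absdiff k l = (if k \<le> l then l - k else k - l)"

definition gso_exch ::
  "nat \<Rightarrow> ('a::real_inner \<Rightarrow> 'a) \<Rightarrow> ('j \<Rightarrow> nat \<Rightarrow> 'a) \<Rightarrow> ('j \<Rightarrow> 'a)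
     \<Rightarrow> (nat \<Rightarrow> 'j \<Rightarrow> 'j \<Rightarrow> real) \<Rightarrow> ('j \<Rightarrow> 'j \<Rightarrow> real) \<Rightarrow> bool" where
  "gso_exch n E Y e d c \<longleftrightarrow>
     (\<forall>j k. 1 \<le> k \<longrightarrow> E (Y j k) = e j) \<and>
     (\<forall>i j k l. 1 \<le> k \<longrightarrow> 1 \<le> l \<longrightarrow> absdiff k l < n \<longrightarrow>
        inner (Y i k) (Y j l) = d (absdiff k l) i j) \<and>
     (\<forall>i j k l. 1 \<le> k \<longrightarrow> 1 \<le> l \<longrightarrow> n \<le> absdiff k l \<longrightarrow>
        inner (Y i k) (Y j l) = c i j)"

end

theory Submission imports Defs begin

text \<open>
  The common part \<open>M j\<close> is the limit of the Cesaro means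
  \<open>A N = (Y j 1 + \<dots> + Y j N) / N\<close>. These form a Cauchy sequence: the Gram matrix of
  \<open>Y j 1, Y j 2, \<dots>\<close> equals the constant \<open>c j j\<close> outside a band of width \<open>n\<close> around
  the diagonal, so the entries inside the band contribute only \<open>O(1 / min N N')\<close> to
  \<open>\<parallel>A N - A N'\<parallel>\<^sup>2\<close>. Every inner product with \<open>M i\<close> needed afterwards is the Cesaro
  limit of an eventually constant sequence, e.g. \<open>(Y i l, Y j k) = c i j\<close> for \<open>l \<ge> k + n\<close>;
  finally \<open>R j k = Y j k - M j\<close>.
\<close>

lemma orth_proj_in: "is_orth_proj S E \<Longrightarrow> E x \<in> S"
  by (simp add: is_orth_proj_def)

lemma orth_proj_inner:
  assumes "is_orth_proj S E" and "y \<in> S"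
  shows "inner (E x) y = inner x y"
proof -
  have "inner (x - E x) y = 0"
    using assms unfolding is_orth_proj_def by blast
  then show ?thesis
    by (simp add: inner_diff_left)
qed

lemma orth_proj_eqI:
  assumes E: "is_orth_proj S E" and "z \<in> S" and xz: "\<And>y. y \<in> S \<Longrightarrow> inner x y = inner z y"
  shows "E x = z"
proof -
  have perp: "inner (z - E x) y = 0" if "y \<in> S" for y
    using orth_proj_inner[OF E that] xz[OF that] by (simp add: inner_diff_left)
  have "inner (z - E x) (z - E x) = 0"
    using perp[OF \<open>z \<in> S\<close>] perp[OF orth_proj_in[OF E]] by (simp add: inner_diff_right)
  then show ?thesis by simp
qed

lemma absdiff_commute: "absdiff k l = absdiff l k"
  by (simp add: absdiff_def)

definition cesaro_mean :: "(nat \<Rightarrow> 'a::real_vector) \<Rightarrow> nat \<Rightarrow> 'a" where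
  "cesaro_mean Z N = (1 / real N) *\<^sub>R (\<Sum>k=1..N. Z k)"

lemma inner_cesaro_mean_left:
  "inner (cesaro_mean Z N) y = cesaro_mean (\<lambda>k. inner (Z k) y) N"
  by (simp add: cesaro_mean_def inner_sum_left)

lemma cesaro_mean_eventually_const:
  fixes Z :: "nat \<Rightarrow> 'a::real_normed_vector"
  assumes "\<forall>k\<ge>K. Z k = a"
  shows "cesaro_mean Z \<longlonglongrightarrow> a"
proof -
  define D where "D = (\<Sum>k=1..K. Z k) - real K *\<^sub>R a"
  have "a + (1 / real N) *\<^sub>R D = cesaro_mean Z N" if N: "K < N" for N
  proof -
    have "{1..N} = {1..K} \<union> {Suc K..N}" using N by auto
    then have "(\<Sum>k=1..N. Z k) = (\<Sum>k=1..K. Z k) + (\<Sum>k=Suc K..N. Z k)"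
      by (simp add: sum.union_disjoint)
    also have "(\<Sum>k=Suc K..N. Z k) = (\<Sum>k=Suc K..N. a)"
      using assms by (intro sum.cong) auto
    also have "\<dots> = real (N - K) *\<^sub>R a"
      by (simp add: sum_constant_scaleR)
    finally have "(\<Sum>k=1..N. Z k) = D + real N *\<^sub>R a"
      using N by (simp add: D_def of_nat_diff algebra_simps)
    then show ?thesis using N by (simp add: cesaro_mean_def scaleR_add_right)
  qed
  then have "\<forall>\<^sub>F N in sequentially. a + (1 / real N) *\<^sub>R D = cesaro_mean Z N"
    by (auto intro: eventually_sequentiallyI[of "Suc K"])
  moreover have "(\<lambda>N. a + (1 / real N) *\<^sub>R D) \<longlonglongrightarrow> a + 0 *\<^sub>R D"
    by (intro tendsto_intros)
  ultimately show ?thesis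
    using Lim_transform_eventually by fastforce
qed

lemma inner_lim_cesaro_mean_eventually_const:
  assumes "cesaro_mean Z \<longlonglongrightarrow> L" and "\<forall>k\<ge>K. inner (Z k) y = a"
  shows "inner L y = a"
proof -
  have "(\<lambda>N. inner (cesaro_mean Z N) y) \<longlonglongrightarrow> inner L y"
    using assms(1) by (intro tendsto_intros)
  moreover have "(\<lambda>N. inner (cesaro_mean Z N) y) \<longlonglongrightarrow> a"
    unfolding inner_cesaro_mean_left using assms(2) by (rule cesaro_mean_eventually_const)
  ultimately show ?thesis by (rule LIMSEQ_unique)
qed

lemma banded_row_sum_bound:
  fixes f :: "nat \<Rightarrow> real"
  assumes "0 \<le> B" and bound: "\<And>l. l \<in> {1..M} \<Longrightarrow> \<bar>f l\<bar> \<le> B"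
    and band: "\<And>l. l \<in> {1..M} \<Longrightarrow> n \<le> absdiff k l \<Longrightarrow> f l = 0"
  shows "\<bar>\<Sum>l=1..M. f l\<bar> \<le> 2 * real n * B"
proof -
  let ?T = "{l \<in> {1..M}. absdiff k l < n}"
  have "(\<Sum>l=1..M. f l) = (\<Sum>l\<in>?T. f l)"
    using band by (intro sum.mono_neutral_right) (auto simp: not_less)
  then have "\<bar>\<Sum>l=1..M. f l\<bar> \<le> (\<Sum>l\<in>?T. \<bar>f l\<bar>)"
    by (simp add: sum_abs)
  also have "\<dots> \<le> real (card ?T) * B"
    using bound sum_bounded_above[of ?T "\<lambda>l. \<bar>f l\<bar>" B] by auto
  also have "\<dots> \<le> 2 * real n * B"
  proof -
    have "?T \<subseteq> {k - n..<k + n}"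
      by (auto simp: absdiff_def split: if_splits)
    then have "card ?T \<le> 2 * n"
      using card_mono[of "{k - n..<k + n}" ?T] by auto
    then have "real (card ?T) \<le> 2 * real n"
      by linarith
    then show ?thesis
      using \<open>0 \<le> B\<close> by (rule mult_right_mono)
  qed
  finally show ?thesis .
qed

lemma banded_double_sum_bound:
  fixes \<delta> :: "nat \<Rightarrow> nat \<Rightarrow> real"
  assumes "0 \<le> B" and bound: "\<And>k l. k \<in> {1..N} \<Longrightarrow> l \<in> {1..M} \<Longrightarrow> \<bar>\<delta> k l\<bar> \<le> B"
    and band: "\<And>k l. k \<in> {1..N} \<Longrightarrow> l \<in> {1..M} \<Longrightarrow> n \<le> absdiff k l \<Longrightarrow> \<delta> k l = 0"
  shows "\<bar>\<Sum>k=1..N. \<Sum>l=1..M. \<delta> k l\<bar> \<le> 2 * real n * B * real (min N M)"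
proof -
  have rows: "\<bar>\<Sum>k=1..N. \<Sum>l=1..M. \<delta> k l\<bar> \<le> 2 * real n * B * real N"
  proof -
    have "\<bar>\<Sum>k=1..N. \<Sum>l=1..M. \<delta> k l\<bar> \<le> (\<Sum>k=1..N. \<bar>\<Sum>l=1..M. \<delta> k l\<bar>)"
      by (rule sum_abs)
    also have "\<dots> \<le> (\<Sum>k=1..N. 2 * real n * B)"
      using assms by (intro sum_mono banded_row_sum_bound) auto
    finally show ?thesis by (simp add: mult_ac)
  qed
  have cols: "\<bar>\<Sum>k=1..N. \<Sum>l=1..M. \<delta> k l\<bar> \<le> 2 * real n * B * real M"
  proof -
    have "\<bar>\<Sum>k=1..N. \<Sum>l=1..M. \<delta> k l\<bar> = \<bar>\<Sum>l=1..M. \<Sum>k=1..N. \<delta> k l\<bar>"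
      by (simp only: sum.swap[of \<delta>])
    also have "\<dots> \<le> (\<Sum>l=1..M. \<bar>\<Sum>k=1..N. \<delta> k l\<bar>)"
      by (rule sum_abs)
    also have "\<dots> \<le> (\<Sum>l=1..M. 2 * real n * B)"
    proof (intro sum_mono)
      fix l assume "l \<in> {1..M}"
      then show "\<bar>\<Sum>k=1..N. \<delta> k l\<bar> \<le> 2 * real n * B"
        using assms by (intro banded_row_sum_bound[where k=l]) (auto simp: absdiff_commute[of l])
    qed
    finally show ?thesis by (simp add: mult_ac)
  qed
  show ?thesis
    using rows cols by (simp add: min_def)
qed

lemma inner_cesaro_mean_banded:
  fixes Z :: "nat \<Rightarrow> 'a::real_inner"
  assumes band: "\<And>k l. 1 \<le> k \<Longrightarrow> 1 \<le> l \<Longrightarrow> n \<le> absdiff k l \<Longrightarrow> inner (Z k) (Z l) = c"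
    and dev: "\<And>k l. 1 \<le> k \<Longrightarrow> 1 \<le> l \<Longrightarrow> \<bar>inner (Z k) (Z l) - c\<bar> \<le> B"
    and "0 < N" "0 < M"
  shows "\<bar>inner (cesaro_mean Z N) (cesaro_mean Z M) - c\<bar> \<le> 2 * real n * B / real (max N M)"
proof -
  have "0 \<le> B"
    using dev[of 1 1] by linarith
  have "inner (cesaro_mean Z N) (cesaro_mean Z M)
      = (\<Sum>k=1..N. \<Sum>l=1..M. inner (Z k) (Z l)) / (real N * real M)"
    unfolding cesaro_mean_def inner_scaleR_left inner_scaleR_right inner_sum_left
    unfolding inner_sum_right by simp
  moreover have "(\<Sum>k=1..N. \<Sum>l=1..M. inner (Z k) (Z l) - c)
      = (\<Sum>k=1..N. \<Sum>l=1..M. inner (Z k) (Z l)) - real N * real M * c"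
    by (simp add: sum_subtractf)
  ultimately have "inner (cesaro_mean Z N) (cesaro_mean Z M) - c
      = (\<Sum>k=1..N. \<Sum>l=1..M. inner (Z k) (Z l) - c) / (real N * real M)"
    using \<open>0 < N\<close> \<open>0 < M\<close> by (simp add: diff_divide_distrib)
  also have "\<bar>\<dots>\<bar> \<le> 2 * real n * B * real (min N M) / (real N * real M)"
    unfolding abs_divide abs_mult abs_of_nat using \<open>0 \<le> B\<close> band dev
    by (intro divide_right_mono banded_double_sum_bound) auto
  also have "\<dots> = 2 * real n * B / real (max N M)"
    using \<open>0 < N\<close> \<open>0 < M\<close> by (simp add: min_def max_def)
  finally show ?thesis .
qed

lemma Cauchy_if_dist_bounded_by_null:
  fixes X :: "nat \<Rightarrow> 'a::metric_space"
  assumes "b \<longlonglongrightarrow> 0" and "\<And>N m p. 0 < N \<Longrightarrow> N \<le> m \<Longrightarrow> N \<le> p \<Longrightarrow> dist (X m) (X p) \<le> b N"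
  shows "Cauchy X"
proof (rule metric_CauchyI)
  fix e :: real
  assume "0 < e"
  then obtain N where N: "\<And>m. N \<le> m \<Longrightarrow> b m < e"
    using order_tendstoD(2)[OF assms(1)] by (auto simp: eventually_sequentially)
  show "\<exists>M. \<forall>m\<ge>M. \<forall>p\<ge>M. dist (X m) (X p) < e"
  proof (intro exI allI impI)
    fix m p
    assume "Suc N \<le> m" "Suc N \<le> p"
    then have "dist (X m) (X p) \<le> b (Suc N)"
      by (intro assms(2)) auto
    also have "\<dots> < e"
      using N by simp
    finally show "dist (X m) (X p) < e" .
  qed
qed

lemma cesaro_mean_convergent_banded:
  fixes Z :: "nat \<Rightarrow> 'a::{real_inner, complete_space}"
  assumes band: "\<And>k l. 1 \<le> k \<Longrightarrow> 1 \<le> l \<Longrightarrow> n \<le> absdiff k l \<Longrightarrow> inner (Z k) (Z l) = c"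
    and dev: "\<And>k l. 1 \<le> k \<Longrightarrow> 1 \<le> l \<Longrightarrow> \<bar>inner (Z k) (Z l) - c\<bar> \<le> B"
  shows "convergent (cesaro_mean Z)"
proof -
  define K where "K = 2 * real n * B"
  have "0 \<le> K"
    using dev[of 1 1] by (simp add: K_def)
  have "(norm (cesaro_mean Z m - cesaro_mean Z p))\<^sup>2 \<le> 4 * (K / real N)"
    if "0 < N" "N \<le> m" "N \<le> p" for N m p
  proof -
    let ?g = "\<lambda>m p. inner (cesaro_mean Z m) (cesaro_mean Z p) - c"
    have g: "\<bar>?g m' p'\<bar> \<le> K / real N" if "N \<le> m'" "N \<le> p'" for m' p'
    proof -
      have "K / real (max m' p') \<le> K / real N"
        using \<open>0 \<le> K\<close> \<open>0 < N\<close> that by (intro divide_left_mono) auto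
      then show ?thesis
        using inner_cesaro_mean_banded[where Z=Z and n=n and c=c and B=B, OF band dev, of m' p']
          \<open>0 < N\<close> that
        by (simp add: K_def)
    qed
    \<comment> \<open>the three copies of \<open>c\<close> cancel\<close>
    have "(norm (cesaro_mean Z m - cesaro_mean Z p))\<^sup>2 = ?g m m - 2 * ?g m p + ?g p p"
      by (simp add: power2_norm_eq_inner inner_diff_left inner_diff_right inner_commute)
    then show ?thesis
      using g[of m m] g[of m p] g[of p p] that by (simp add: abs_le_iff)
  qed
  then have "dist (cesaro_mean Z m) (cesaro_mean Z p) \<le> sqrt (4 * (K / real N))"
    if "0 < N" "N \<le> m" "N \<le> p" for N m p
    using that by (simp add: dist_norm real_le_rsqrt)
  moreover have "(\<lambda>N. sqrt (4 * (K / real N))) \<longlonglongrightarrow> sqrt (4 * 0)"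
    by (intro tendsto_intros)
  ultimately have "Cauchy (cesaro_mean Z)"
    by (intro Cauchy_if_dist_bounded_by_null[where b = "\<lambda>N. sqrt (4 * (K / real N))"]) auto
  then show ?thesis
    by (simp add: Cauchy_convergent_iff)
qed

lemma orth_proj_lim_cesaro_mean:
  assumes E: "is_orth_proj S E" and L: "cesaro_mean Z \<longlonglongrightarrow> L" and const: "\<forall>k\<ge>K. E (Z k) = a"
  shows "E L = a"
proof (rule orth_proj_eqI[OF E])
  show "a \<in> S"
    using orth_proj_in[OF E, of "Z K"] const by simp
  fix y
  assume "y \<in> S"
  then have "\<forall>k\<ge>K. inner (Z k) y = inner a y"
    using const orth_proj_inner[OF E] by metis
  then show "inner L y = inner a y"
    by (rule inner_lim_cesaro_mean_eventually_const[OF L])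
qed

lemma orth_proj_diff_eq_zero:
  assumes E: "is_orth_proj S E" and "0 \<in> S" and "E x = E z"
  shows "E (x - z) = 0"
proof (rule orth_proj_eqI[OF E \<open>0 \<in> S\<close>])
  fix y
  assume "y \<in> S"
  then show "inner (x - z) y = inner 0 y"
    using orth_proj_inner[OF E, of y x] orth_proj_inner[OF E, of y z] \<open>E x = E z\<close>
    by (simp add: inner_diff_left)
qed

lemma gso_exchD:
  assumes "gso_exch n E Y e d c"
  shows "1 \<le> k \<Longrightarrow> E (Y j k) = e j"
    and "1 \<le> k \<Longrightarrow> 1 \<le> l \<Longrightarrow> absdiff k l < n \<Longrightarrow> inner (Y i k) (Y j l) = d (absdiff k l) i j"
    and "1 \<le> k \<Longrightarrow> 1 \<le> l \<Longrightarrow> n \<le> absdiff k l \<Longrightarrow> inner (Y i k) (Y j l) = c i j"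
  using assms unfolding gso_exch_def by blast+

lemma gso_exch_c_sym:
  assumes "gso_exch n E Y e d c"
  shows "c i j = c j i"
proof -
  have "absdiff 1 (n + 1) = n" "absdiff (n + 1) 1 = n"
    by (simp_all add: absdiff_def)
  then have "c i j = inner (Y i 1) (Y j (n + 1))" "c j i = inner (Y j (n + 1)) (Y i 1)"
    using gso_exchD(3)[OF assms] by auto
  then show ?thesis
    by (simp add: inner_commute)
qed

lemma gso_exch_inner_dev_bounded:
  assumes "gso_exch n E Y e d c" "1 \<le> k" "1 \<le> l"
  shows "\<bar>inner (Y j k) (Y j l) - c j j\<bar> \<le> (\<Sum>m<n. \<bar>d m j j - c j j\<bar>)"
proof (cases "absdiff k l < n")
  case True
  then have "\<bar>inner (Y j k) (Y j l) - c j j\<bar> = \<bar>d (absdiff k l) j j - c j j\<bar>"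
    using gso_exchD(2)[OF assms] by simp
  also have "\<dots> \<le> (\<Sum>m<n. \<bar>d m j j - c j j\<bar>)"
    using True by (intro member_le_sum) auto
  finally show ?thesis .
next
  case False
  then have "\<bar>inner (Y j k) (Y j l) - c j j\<bar> = 0"
    using gso_exchD(3)[OF assms] by simp
  then show ?thesis
    by (simp add: sum_nonneg)
qed

lemma gso_exch_cesaro_mean_convergent:
  fixes Y :: "'j \<Rightarrow> nat \<Rightarrow> 'a::{real_inner, complete_space}"
  assumes "gso_exch n E Y e d c"
  shows "convergent (cesaro_mean (Y j))"
proof (rule cesaro_mean_convergent_banded)
  show "inner (Y j k) (Y j l) = c j j" if "1 \<le> k" "1 \<le> l" "n \<le> absdiff k l" for k l
    using gso_exchD(3)[OF assms] that by simp
  show "\<bar>inner (Y j k) (Y j l) - c j j\<bar> \<le> (\<Sum>m<n. \<bar>d m j j - c j j\<bar>)" if "1 \<le> k" "1 \<le> l" for k l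
    using assms that by (rule gso_exch_inner_dev_bounded)
qed

lemma gso_exch_common_part:
  fixes Y :: "'j \<Rightarrow> nat \<Rightarrow> 'a::{real_inner, complete_space}"
  assumes exch: "gso_exch n E Y e d c" and E: "is_orth_proj S E"
  obtains M where "\<And>j. E (M j) = e j" and "\<And>i j. inner (M i) (M j) = c i j"
    and "\<And>i j k. 1 \<le> k \<Longrightarrow> inner (M i) (Y j k) = c i j"
proof -
  define M where "M j = lim (cesaro_mean (Y j))" for j
  have M: "cesaro_mean (Y j) \<longlonglongrightarrow> M j" for j
    using gso_exch_cesaro_mean_convergent[OF exch] by (simp add: M_def convergent_LIMSEQ_iff)
  have MY: "inner (M i) (Y j k) = c i j" if "1 \<le> k" for i j k
  proof -
    have "\<forall>l\<ge>k + n. n \<le> absdiff l k"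
      by (auto simp: absdiff_def)
    then have "\<forall>l\<ge>k + n. inner (Y i l) (Y j k) = c i j"
      using gso_exchD(3)[OF exch] that by simp
    then show ?thesis
      by (rule inner_lim_cesaro_mean_eventually_const[OF M])
  qed
  show thesis
  proof (rule that)
    show "E (M j) = e j" for j
      using gso_exchD(1)[OF exch] by (intro orth_proj_lim_cesaro_mean[OF E M[of j], of 1]) auto
    show "inner (M i) (M j) = c i j" for i j
      using inner_lim_cesaro_mean_eventually_const[OF M[of j], of 1 "M i" "c i j"] MY
      by (simp add: inner_commute)
    show "inner (M i) (Y j k) = c i j" if "1 \<le> k" for i j k
      using that by (rule MY)
  qed
qed

theorem theorem1:
  fixes C :: "'a::{real_inner, complete_space} set"
    and E :: "'a \<Rightarrow> 'a"
    and Y :: "'j \<Rightarrow> nat \<Rightarrow> 'a"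
    and n :: nat
    and e :: "'j \<Rightarrow> 'a"
    and d :: "nat \<Rightarrow> 'j \<Rightarrow> 'j \<Rightarrow> real"
    and c :: "'j \<Rightarrow> 'j \<Rightarrow> real"
  assumes indepC: "independent C"
    and projE: "is_orth_proj (closure (span C)) E"
    and exch: "gso_exch n E Y e d c"
  shows "\<exists>M R.
     (\<forall>j k. 1 \<le> k \<longrightarrow> Y j k = M j + R j k) \<and>
     (\<forall>j k. 1 \<le> k \<longrightarrow> E (Y j k) = E (M j) \<and> E (R j k) = 0) \<and>
     (\<forall>i j k. 1 \<le> k \<longrightarrow>
        inner (M i) (M j) = c i j \<and> inner (M i) (Y j k) = c i j \<and> inner (M i) (R j k) = 0) \<and>
     (\<forall>i j k l. 1 \<le> k \<longrightarrow> 1 \<le> l \<longrightarrow>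
        inner (R i k) (R j l) = inner (Y i k) (R j l) \<and>
        inner (Y i k) (R j l) = inner (Y i k) (Y j l) - c i j) \<and>
     (\<exists>e' d' c'. gso_exch n E R e' d' c') \<and>
     (\<forall>i j k l. 1 \<le> k \<longrightarrow> 1 \<le> l \<longrightarrow> n \<le> absdiff k l \<longrightarrow> inner (R i k) (R j l) = 0)"
proof -
  obtain M where EM: "\<And>j. E (M j) = e j" and MM: "\<And>i j. inner (M i) (M j) = c i j"
    and MY: "\<And>i j k. 1 \<le> k \<Longrightarrow> inner (M i) (Y j k) = c i j"
    using gso_exch_common_part[OF exch projE] by blast
  define R where "R j k = Y j k - M j" for j k
  have decomp: "M j + R j k = Y j k" for j k
    by (simp add: R_def)
  have EY: "E (Y j k) = E (M j)" if "1 \<le> k" for j k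
    using gso_exchD(1)[OF exch that] EM by simp
  have ER: "E (R j k) = 0" if "1 \<le> k" for j k
    unfolding R_def using projE closure_subset[of "span C"] span_zero EY[OF that]
    by (intro orth_proj_diff_eq_zero) auto
  have MR: "inner (M i) (R j k) = 0" if "1 \<le> k" for i j k
    using MY[OF that] MM by (simp add: R_def inner_diff_right)
  have YR: "inner (Y i k) (R j l) = inner (Y i k) (Y j l) - c i j" if "1 \<le> k" for i j k l
    using MY[OF that, of j i] gso_exch_c_sym[OF exch, of i j]
    by (simp add: R_def inner_diff_right inner_commute[of "Y i k"])
  have RR: "inner (R i k) (R j l) = inner (Y i k) (R j l)" if "1 \<le> l" for i j k l
    using MR[OF that, of i j] by (simp add: R_def inner_diff_left)
  have R0: "inner (R i k) (R j l) = 0" if "1 \<le> k" "1 \<le> l" "n \<le> absdiff k l" for i j k l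
    using RR[OF that(2)] YR[OF that(1)] gso_exchD(3)[OF exch that] by simp
  have "gso_exch n E R (\<lambda>_. 0) (\<lambda>m i j. d m i j - c i j) (\<lambda>_ _. 0)"
    unfolding gso_exch_def using ER RR YR R0 gso_exchD(2)[OF exch] by simp
  then show ?thesis
    using decomp EY ER MM MY MR YR RR R0 by (intro exI[of _ M] exI[of _ R]) auto
qed

end
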